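(* Let $X$ be a zero-dimensional compact metric space and $T:X\to X$ an aperiodic surjective local homeomorphism with $|Sp_l(X,T)|<\infty$. Then \[{\rm dim}_{\rm Rok}(X,T)\le 2|Sp_l(X,T)|+1.\]
   Context: Aperiodic: no $x$ with $T^n(x)=x$, $n\ge1$. $Sp_l(X,T)=\{x: |T^{-1}(\{x\})|\ge2\}$. For $N\ge1$, an $N$-Rokhlin tower is a collection $\{U_0,\dots,U_{N-1}\}$ of nonempty subsets of $X$ with $U_k=T^{-1}(U_{k-1})$ for $k=1,\dots,N-1$ and $\overline{U_i}\cap\overline{U_j}=\varnothing$ for $i\ne j$; it is open if all $U_i$ are open. ${\rm dim}_{\rm Rok}(X,T)\le d$ means: for every $N\ge1$ there are at most $d+1$ open $N$-Rokhlin towers whose members together cover $X$. ${\rm dim}_{\rm Rok}(X,T)$ is the least such $d$ ($\infty$ if none). *)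

theory Defs
  imports "HOL-Analysis.Analysis"
begin

definition zero_dimensional :: "'a::metric_space set \<Rightarrow> bool" where
  "zero_dimensional X \<longleftrightarrow>
     (\<forall>U x. openin (top_of_set X) U \<and> x \<in> U \<longrightarrow>
        (\<exists>V. openin (top_of_set X) V \<and> closedin (top_of_set X) V \<and> x \<in> V \<and> V \<subseteq> U))"

definition local_homeomorphism :: "'a::metric_space set \<Rightarrow> ('a \<Rightarrow> 'a) \<Rightarrow> bool" where
  "local_homeomorphism X T \<longleftrightarrow> T ` X \<subseteq> X \<and>
     (\<forall>x\<in>X. \<exists>U. openin (top_of_set X) U \<and> x \<in> U \<and> openin (top_of_set X) (T ` U) \<and>
        (\<exists>g. homeomorphism U (T ` U) T g))"

definition aperiodic :: "'a set \<Rightarrow> ('a \<Rightarrow> 'a) \<Rightarrow> bool" where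
  "aperiodic X T \<longleftrightarrow> (\<forall>x\<in>X. \<forall>n::nat. n \<ge> 1 \<longrightarrow> (T ^^ n) x \<noteq> x)"

definition Sp_l :: "'a set \<Rightarrow> ('a \<Rightarrow> 'a) \<Rightarrow> 'a set" where
  "Sp_l X T = {x \<in> X. \<exists>y\<in>X. \<exists>z\<in>X. y \<noteq> z \<and> T y = x \<and> T z = x}"

definition open_rokhlin_tower :: "'a::metric_space set \<Rightarrow> ('a \<Rightarrow> 'a) \<Rightarrow> nat \<Rightarrow> (nat \<Rightarrow> 'a set) \<Rightarrow> bool" where
  "open_rokhlin_tower X T N U \<longleftrightarrow>
     (\<forall>k<N. U k \<noteq> {} \<and> U k \<subseteq> X \<and> openin (top_of_set X) (U k)) \<and>
     (\<forall>k. 1 \<le> k \<and> k < N \<longrightarrow> U k = {x \<in> X. T x \<in> U (k - 1)}) \<and>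
     (\<forall>i<N. \<forall>j<N. i \<noteq> j \<longrightarrow> closure (U i) \<inter> closure (U j) = {})"

definition rokhlin_dim_le :: "'a::metric_space set \<Rightarrow> ('a \<Rightarrow> 'a) \<Rightarrow> nat \<Rightarrow> bool" where
  "rokhlin_dim_le X T d \<longleftrightarrow>
     (\<forall>N::nat. N \<ge> 1 \<longrightarrow>
        (\<exists>m::nat. \<exists>tw :: nat \<Rightarrow> nat \<Rightarrow> 'a set. m \<le> d + 1 \<and>
           (\<forall>i<m. open_rokhlin_tower X T N (tw i)) \<and>
           (\<Union>i<m. \<Union>k<N. tw i k) = X))"

end

theory Submission
  imports Defs
begin

text \<open>Aperiodicity, zero-dimensionality and compactness give a clopen set \<open>M\<close> which no point
  re-enters in fewer than \<open>N\<close> steps and which is maximal with this property: every point of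
  \<open>X\<close> lies in \<open>M\<close> or within fewer than \<open>N\<close> steps of \<open>M\<close> along an orbit, forwards or
  backwards. If an orbit stays outside \<open>M\<close>, the end of each of its blocks of length \<open>N\<close> is
  reached from a point of \<open>M\<close>, and the two orbits merge at a point of \<open>Sp_l X T\<close> inside that
  block. Orbits are injective, so this happens in at most \<open>|Sp_l X T|\<close> blocks, and every point
  enters \<open>M\<close> within \<open>(|Sp_l X T| + 2) N\<close> steps. The sets \<open>B\<^sub>q\<close> of points entering \<open>M\<close>
  first at time \<open>q N\<close>, \<open>q < |Sp_l X T| + 2\<close>, are clopen bases without early returns, and the
  towers \<open>T\<^sup>-\<^sup>k B\<^sub>q\<close>, \<open>k < N\<close>, cover \<open>X\<close>; which is better than the claimed bound.\<close>

lemma local_homeomorphism_continuous_on: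
  assumes "local_homeomorphism X T"
  shows "continuous_on X T"
  unfolding continuous_on_eq_continuous_within
proof
  fix x assume "x \<in> X"
  then obtain U g where U: "openin (top_of_set X) U" "x \<in> U" "homeomorphism U (T ` U) T g"
    using assms unfolding local_homeomorphism_def by blast
  obtain G where G: "open G" "U = X \<inter> G" using U(1) openin_open by blast
  have "continuous (at x within U) T"
    using U(2,3) homeomorphism_cont1 continuous_on_eq_continuous_within by blast
  moreover have "at x within X = at x within U"
    using G U(2) by (intro at_within_nhd[of x G]) auto
  ultimately show "continuous (at x within X) T" by simp
qed

lemma local_homeomorphism_openin_image:
  assumes "local_homeomorphism X T" "openin (top_of_set X) A"
  shows "openin (top_of_set X) (T ` A)"
proof (subst openin_subopen, intro ballI)
  fix y assume "y \<in> T ` A"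
  then obtain x where x: "x \<in> A" "y = T x" by blast
  then obtain U g where U: "openin (top_of_set X) U" "x \<in> U" "openin (top_of_set X) (T ` U)"
      "homeomorphism U (T ` U) T g"
    using assms openin_imp_subset unfolding local_homeomorphism_def by blast
  have "openin (top_of_set U) (A \<inter> U)"
    using openin_subset_trans[OF openin_Int[OF assms(2) U(1)] _ openin_imp_subset[OF U(1)]] by blast
  then have "openin (top_of_set (T ` U)) (T ` (A \<inter> U))"
    using homeomorphism_imp_open_map U(4) by blast
  then have "openin (top_of_set X) (T ` (A \<inter> U))" using U(3) openin_trans by blast
  then show "\<exists>V. openin (top_of_set X) V \<and> y \<in> V \<and> V \<subseteq> T ` A" using x U(2) by blast
qed

lemma funpow_in_set: "T ` X \<subseteq> X \<Longrightarrow> x \<in> X \<Longrightarrow> (T ^^ n) x \<in> X"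
  by (induction n) auto

lemma funpow_image_eq: "T ` X = X \<Longrightarrow> (T ^^ n) ` X = X"
proof (induction n)
  case (Suc n)
  have "(T ^^ Suc n) ` X = T ` (T ^^ n) ` X" by (simp add: image_comp)
  then show ?case using Suc by simp
qed simp

lemma continuous_on_funpow:
  assumes "continuous_on X T" "T ` X \<subseteq> X"
  shows "continuous_on X (T ^^ n)"
proof (induction n)
  case (Suc n)
  have "continuous_on ((T ^^ n) ` X) T"
    by (rule continuous_on_subset[OF assms(1)]) (use funpow_in_set[OF assms(2)] in blast)
  with Suc.IH have "continuous_on X (T \<circ> (T ^^ n))" by (rule continuous_on_compose)
  then show ?case by simp
qed (simp add: continuous_on_id)

definition clopen_in :: "'a::topological_space set \<Rightarrow> 'a set \<Rightarrow> bool" where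
  "clopen_in X A \<longleftrightarrow> openin (top_of_set X) A \<and> closedin (top_of_set X) A"

lemma clopen_in_subset: "clopen_in X A \<Longrightarrow> A \<subseteq> X"
  unfolding clopen_in_def using openin_imp_subset by blast

lemma clopen_in_Un: "clopen_in X A \<Longrightarrow> clopen_in X B \<Longrightarrow> clopen_in X (A \<union> B)"
  unfolding clopen_in_def by (simp add: openin_Un closedin_Un)

lemma clopen_in_Diff: "clopen_in X A \<Longrightarrow> clopen_in X B \<Longrightarrow> clopen_in X (A - B)"
  unfolding clopen_in_def by (simp add: openin_diff closedin_diff)

lemma clopen_in_UN:
  assumes "finite I" "\<And>i. i \<in> I \<Longrightarrow> clopen_in X (A i)"
  shows "clopen_in X (\<Union>i\<in>I. A i)"
  using assms by (induction I rule: finite_induct) (auto simp: clopen_in_def openin_Un closedin_Un)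

lemma clopen_in_preimage_funpow:
  assumes "continuous_on X T" "T ` X \<subseteq> X" "clopen_in X A"
  shows "clopen_in X {x\<in>X. (T ^^ n) x \<in> A}"
proof -
  have cont: "continuous_on X (T ^^ n)" and maps: "(T ^^ n) \<in> X \<rightarrow> X"
    using continuous_on_funpow[OF assms(1,2)] funpow_in_set[OF assms(2)] by auto
  have "{x\<in>X. (T ^^ n) x \<in> A} = X \<inter> (T ^^ n) -` A" by blast
  then show ?thesis
    using assms(3) continuous_openin_preimage[OF cont maps] continuous_closedin_preimage_gen[OF cont maps]
    unfolding clopen_in_def by simp
qed

lemma clopen_in_image_funpow:
  assumes "local_homeomorphism X T" "compact X" "clopen_in X A"
  shows "clopen_in X ((T ^^ n) ` A)"
  using assms(3)
proof (induction n)
  case (Suc n)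
  have img: "T ` X \<subseteq> X" using assms(1) unfolding local_homeomorphism_def by blast
  have A': "clopen_in X ((T ^^ n) ` A)" by (rule Suc.IH[OF Suc.prems])
  have "compact ((T ^^ n) ` A)" using A' closedin_compact assms(2) unfolding clopen_in_def by blast
  moreover have "continuous_on ((T ^^ n) ` A) T"
    using local_homeomorphism_continuous_on[OF assms(1)] clopen_in_subset[OF A'] continuous_on_subset
    by blast
  ultimately have "closed (T ` (T ^^ n) ` A)"
    by (intro compact_imp_closed) (rule compact_continuous_image)
  then have "closedin (top_of_set X) (T ` (T ^^ n) ` A)"
    using img clopen_in_subset[OF A'] by (intro closed_subset) auto
  moreover have "openin (top_of_set X) (T ` (T ^^ n) ` A)"
    using local_homeomorphism_openin_image[OF assms(1)] A' unfolding clopen_in_def by blast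
  ultimately show ?case unfolding clopen_in_def by (simp add: image_comp)
qed simp

subsection \<open>Clopen sets without early returns\<close>

definition no_early_return :: "('a \<Rightarrow> 'a) \<Rightarrow> nat \<Rightarrow> 'a set \<Rightarrow> bool" where
  "no_early_return T N B \<longleftrightarrow> (\<forall>y\<in>B. \<forall>d. 0 < d \<and> d < N \<longrightarrow> (T ^^ d) y \<notin> B)"

definition orbit_near :: "'a set \<Rightarrow> ('a \<Rightarrow> 'a) \<Rightarrow> nat \<Rightarrow> 'a set \<Rightarrow> 'a set" where
  "orbit_near X T N M =
     {x\<in>X. \<exists>d. 0 < d \<and> d < N \<and> ((T ^^ d) x \<in> M \<or> x \<in> (T ^^ d) ` M)}"

lemma clopen_in_orbit_near:
  assumes "local_homeomorphism X T" "compact X" "clopen_in X M"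
  shows "clopen_in X (orbit_near X T N M)"
proof -
  have img: "T ` X \<subseteq> X" using assms(1) unfolding local_homeomorphism_def by blast
  have "orbit_near X T N M = (\<Union>d\<in>{0<..<N}. {x\<in>X. (T ^^ d) x \<in> M} \<union> (T ^^ d) ` M)"
    using funpow_in_set[OF img] clopen_in_subset[OF assms(3)] unfolding orbit_near_def by fastforce
  then show ?thesis
    using clopen_in_preimage_funpow[OF local_homeomorphism_continuous_on[OF assms(1)] img assms(3)]
      clopen_in_image_funpow[OF assms] by (simp add: clopen_in_UN clopen_in_Un)
qed

lemma clopen_no_early_return_nhd:
  assumes "continuous_on X T" "T ` X \<subseteq> X" "zero_dimensional X" "aperiodic X T" "x \<in> X"
  obtains V where "clopen_in X V" "no_early_return T N V" "x \<in> V"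
proof -
  have "\<exists>G. openin (top_of_set X) G \<and> x \<in> G \<and> (\<forall>y\<in>G. (T ^^ d) y \<notin> G)" if "0 < d" for d
  proof -
    have "(T ^^ d) x \<noteq> x" using assms(4,5) that unfolding aperiodic_def by simp
    then obtain S H where SH: "open S" "open H" "x \<in> S" "(T ^^ d) x \<in> H" "S \<inter> H = {}"
      by (metis separation_t2)
    have "openin (top_of_set X) (X \<inter> (T ^^ d) -` H)"
      by (rule continuous_openin_preimage_gen[OF continuous_on_funpow[OF assms(1,2)] SH(2)])
    with openin_open_Int[OF SH(1)] have "openin (top_of_set X) (X \<inter> S \<inter> (X \<inter> (T ^^ d) -` H))"
      by (rule openin_Int)
    moreover have "x \<in> X \<inter> S \<inter> (X \<inter> (T ^^ d) -` H)" using SH assms(5) by simp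
    moreover have "\<forall>y\<in>X \<inter> S \<inter> (X \<inter> (T ^^ d) -` H). (T ^^ d) y \<notin> X \<inter> S \<inter> (X \<inter> (T ^^ d) -` H)"
      using SH(5) by blast
    ultimately show ?thesis by blast
  qed
  then obtain G where G: "\<And>d. 0 < d \<Longrightarrow>
      openin (top_of_set X) (G d) \<and> x \<in> G d \<and> (\<forall>y\<in>G d. (T ^^ d) y \<notin> G d)"
    by metis
  define W where "W = (\<Inter>d\<in>{0<..<N}. G d) \<inter> X"
  have "openin (top_of_set X) W"
    unfolding W_def using G openin_INT[of "{0<..<N}" "top_of_set X" G] by simp
  moreover have "x \<in> W" using G assms(5) unfolding W_def by auto
  ultimately obtain V where V: "clopen_in X V" "x \<in> V" "V \<subseteq> W"
    using assms(3) unfolding zero_dimensional_def clopen_in_def by metis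
  have "no_early_return T N V"
    unfolding no_early_return_def
  proof (intro ballI allI impI notI)
    fix y d assume d: "0 < d \<and> d < N" and "y \<in> V" "(T ^^ d) y \<in> V"
    then have "y \<in> G d" "(T ^^ d) y \<in> G d" using V(3) unfolding W_def by auto
    then show False using G d by blast
  qed
  then show thesis using that V by blast
qed

lemma no_early_return_Un_Diff_orbit_near:
  assumes "no_early_return T N M" "no_early_return T N V" "V \<subseteq> X"
  shows "no_early_return T N (M \<union> (V - orbit_near X T N M))"
  using assms unfolding no_early_return_def orbit_near_def by blast

lemma clopen_no_early_return_absorbing_Union:
  assumes "local_homeomorphism X T" "compact X" "finite \<V>"
    and "\<And>V. V \<in> \<V> \<Longrightarrow> clopen_in X V \<and> no_early_return T N V"
  shows "\<exists>M. clopen_in X M \<and> no_early_return T N M \<and> \<Union>\<V> \<subseteq> M \<union> orbit_near X T N M"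
  using assms(3,4)
proof (induction \<V> rule: finite_induct)
  case empty
  have "clopen_in X {}" "no_early_return T N {}" by (simp_all add: clopen_in_def no_early_return_def)
  then show ?case by (rule_tac x="{}" in exI) simp
next
  case (insert V \<V>)
  have V: "clopen_in X V" "no_early_return T N V" using insert.prems by auto
  have "\<exists>M. clopen_in X M \<and> no_early_return T N M \<and> \<Union>\<V> \<subseteq> M \<union> orbit_near X T N M"
    using insert.prems by (intro insert.IH) simp
  then obtain M where M: "clopen_in X M" "no_early_return T N M" "\<Union>\<V> \<subseteq> M \<union> orbit_near X T N M"
    by (elim exE conjE)
  define M' where "M' = M \<union> (V - orbit_near X T N M)"
  have "clopen_in X M'" unfolding M'_def
    by (intro clopen_in_Un clopen_in_Diff M(1) V(1) clopen_in_orbit_near[OF assms(1,2) M(1)])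
  moreover have "no_early_return T N M'" unfolding M'_def
    by (rule no_early_return_Un_Diff_orbit_near[OF M(2) V(2) clopen_in_subset[OF V(1)]])
  moreover have "orbit_near X T N M \<subseteq> orbit_near X T N M'"
    unfolding M'_def orbit_near_def by auto
  then have "\<Union>(insert V \<V>) \<subseteq> M' \<union> orbit_near X T N M'" using M(3) unfolding M'_def by auto
  ultimately show ?case by auto
qed

lemma exists_clopen_no_early_return_absorbing:
  assumes "local_homeomorphism X T" "compact X" "zero_dimensional X" "aperiodic X T"
  obtains M where "clopen_in X M" "no_early_return T N M" "X \<subseteq> M \<union> orbit_near X T N M"
proof -
  have img: "T ` X \<subseteq> X" using assms(1) unfolding local_homeomorphism_def by blast
  have "\<exists>G. open G \<and> clopen_in X (X \<inter> G) \<and> no_early_return T N (X \<inter> G) \<and> x \<in> G"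
    if x: "x \<in> X" for x
  proof -
    obtain V where V: "clopen_in X V" "no_early_return T N V" "x \<in> V"
      using clopen_no_early_return_nhd[OF local_homeomorphism_continuous_on[OF assms(1)] img assms(3,4) x] .
    moreover obtain G where "open G" "V = X \<inter> G" using V(1) unfolding clopen_in_def openin_open by blast
    ultimately show ?thesis by auto
  qed
  then obtain G where G: "\<And>x. x \<in> X \<Longrightarrow>
      open (G x) \<and> clopen_in X (X \<inter> G x) \<and> no_early_return T N (X \<inter> G x) \<and> x \<in> G x"
    by metis
  then have "\<And>x. x \<in> X \<Longrightarrow> open (G x)" and "X \<subseteq> (\<Union>x\<in>X. G x)" by auto
  then obtain D where D: "D \<subseteq> X" "finite D" "X \<subseteq> (\<Union>x\<in>D. G x)"
    using compactE_image[OF assms(2)] by metis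
  have "\<exists>M. clopen_in X M \<and> no_early_return T N M \<and>
      \<Union>((\<lambda>x. X \<inter> G x) ` D) \<subseteq> M \<union> orbit_near X T N M"
    by (rule clopen_no_early_return_absorbing_Union[OF assms(1,2)]) (use D G in auto)
  then obtain M where M: "clopen_in X M" "no_early_return T N M"
      "\<Union>((\<lambda>x. X \<inter> G x) ` D) \<subseteq> M \<union> orbit_near X T N M"
    by (elim exE conjE)
  have "X \<subseteq> \<Union>((\<lambda>x. X \<inter> G x) ` D)" using D by auto
  then show thesis by (rule that[OF M(1,2) order_trans[OF _ M(3)]])
qed

subsection \<open>Every orbit enters an absorbing set quickly\<close>

lemma funpow_eq_imp_Sp_l:
  assumes "T ` X \<subseteq> X" "y \<in> X" "z \<in> X" "y \<noteq> z" "(T ^^ d) y = (T ^^ d) z"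
  shows "\<exists>e. 1 \<le> e \<and> e \<le> d \<and> (T ^^ e) z \<in> Sp_l X T"
  using assms(5)
proof (induction d)
  case 0
  then show ?case using assms(4) by simp
next
  case (Suc d)
  show ?case
  proof (cases "(T ^^ d) y = (T ^^ d) z")
    case True
    then show ?thesis using Suc.IH le_SucI by blast
  next
    case False
    have "(T ^^ d) y \<in> X" "(T ^^ d) z \<in> X" "(T ^^ Suc d) z \<in> X"
      using funpow_in_set[OF assms(1)] assms(2,3) by blast+
    then have "(T ^^ Suc d) z \<in> Sp_l X T"
      using False Suc.prems unfolding Sp_l_def by auto
    then show ?thesis by (intro exI[of _ "Suc d"]) simp
  qed
qed

lemma aperiodic_funpow_inj:
  assumes "T ` X \<subseteq> X" "aperiodic X T" "x \<in> X" "(T ^^ a) x = (T ^^ b) x"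
  shows "a = b"
proof -
  have "a = b" if "a \<le> b" "(T ^^ a) x = (T ^^ b) x" for a b
  proof (rule ccontr)
    assume "a \<noteq> b"
    have "(T ^^ (b - a)) ((T ^^ a) x) = (T ^^ (b - a + a)) x" by (simp add: funpow_add)
    also have "\<dots> = (T ^^ a) x" using that by simp
    finally have "(T ^^ (b - a)) ((T ^^ a) x) = (T ^^ a) x" .
    moreover have "(T ^^ a) x \<in> X" using funpow_in_set[OF assms(1,3)] .
    ultimately show False using assms(2) \<open>a \<noteq> b\<close> that(1) unfolding aperiodic_def by simp
  qed
  then show ?thesis using assms(4) by (metis nle_le)
qed

text \<open>The last point of the \<open>q\<close>-th block is reached from a point of \<open>M\<close> in fewer than \<open>N\<close>
  steps, and the two orbits merge inside the block.\<close>
lemma orbit_block_meets_Sp_l: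
  assumes "T ` X \<subseteq> X" "M \<subseteq> X" "X \<subseteq> M \<union> orbit_near X T N M" "x \<in> X" "0 < N"
    and avoid: "\<And>k. k < (q + 2) * N \<Longrightarrow> (T ^^ k) x \<notin> M"
  shows "\<exists>p. p div N = q \<and> (T ^^ p) x \<in> Sp_l X T"
proof -
  define j where "j = q * N + (N - 1)"
  have "(T ^^ j) x \<notin> M" using avoid[of j] assms(5) unfolding j_def by simp
  moreover have "(T ^^ j) x \<in> X" using funpow_in_set[OF assms(1,4)] .
  ultimately obtain d where d: "0 < d" "d < N"
      and near: "(T ^^ d) ((T ^^ j) x) \<in> M \<or> (T ^^ j) x \<in> (T ^^ d) ` M"
    using assms(3) unfolding orbit_near_def by blast
  have "(T ^^ (d + j)) x \<notin> M" using avoid[of "d + j"] d unfolding j_def by simp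
  then have "(T ^^ d) ((T ^^ j) x) \<notin> M" by (simp add: funpow_add)
  with near obtain y where y: "y \<in> M" "(T ^^ d) y = (T ^^ j) x" by (metis image_iff)
  define a where "a = j - d"
  have ja: "j = d + a" and qa: "q * N \<le> a" using d unfolding a_def j_def by simp_all
  have "(T ^^ a) x \<notin> M" using avoid[of a] d unfolding a_def j_def by simp
  then have "y \<noteq> (T ^^ a) x" using y(1) by blast
  moreover have "(T ^^ d) y = (T ^^ d) ((T ^^ a) x)" using y(2) ja by (simp add: funpow_add)
  ultimately obtain e where e: "1 \<le> e" "e \<le> d" "(T ^^ e) ((T ^^ a) x) \<in> Sp_l X T"
    using funpow_eq_imp_Sp_l[OF assms(1)] y(1) assms(2) funpow_in_set[OF assms(1,4)] by blast
  have "(T ^^ (e + a)) x \<in> Sp_l X T" using e(3) by (simp add: funpow_add)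
  moreover have "(e + a) div N = q"
    using e qa ja d unfolding j_def by (intro div_nat_eqI) (simp_all add: mult.commute)
  ultimately show ?thesis by blast
qed

lemma orbit_enters_within:
  assumes "T ` X \<subseteq> X" "aperiodic X T" "finite (Sp_l X T)" "0 < N"
    and "M \<subseteq> X" "X \<subseteq> M \<union> orbit_near X T N M" "x \<in> X"
  shows "\<exists>k < (card (Sp_l X T) + 2) * N. (T ^^ k) x \<in> M"
proof (rule ccontr)
  let ?c = "card (Sp_l X T)"
  assume "\<not> ?thesis"
  then have avoid: "\<And>k. k < (?c + 2) * N \<Longrightarrow> (T ^^ k) x \<notin> M" by blast
  have "\<exists>p. p div N = q \<and> (T ^^ p) x \<in> Sp_l X T" if "q \<le> ?c" for q
  proof (rule orbit_block_meets_Sp_l[OF assms(1,5,6,7,4)])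
    fix k assume "k < (q + 2) * N"
    moreover have "(q + 2) * N \<le> (?c + 2) * N" using that by simp
    ultimately have "k < (?c + 2) * N" by (rule less_le_trans)
    then show "(T ^^ k) x \<notin> M" by (rule avoid)
  qed
  then obtain p where p: "\<And>q. q \<le> ?c \<Longrightarrow> p q div N = q \<and> (T ^^ p q) x \<in> Sp_l X T"
    by metis
  have "inj_on (\<lambda>q. (T ^^ p q) x) {..?c}"
  proof (rule inj_onI)
    fix q q' assume "q \<in> {..?c}" "q' \<in> {..?c}" "(T ^^ p q) x = (T ^^ p q') x"
    then show "q = q'" using p aperiodic_funpow_inj[OF assms(1,2,7)] by (metis atMost_iff)
  qed
  moreover have "(\<lambda>q. (T ^^ p q) x) ` {..?c} \<subseteq> Sp_l X T" using p by auto
  ultimately have "card {..?c} \<le> ?c" using card_inj_on_le assms(3) by blast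
  then show False by simp
qed

subsection \<open>Towers over first entrance sets\<close>

definition first_entry :: "'a set \<Rightarrow> ('a \<Rightarrow> 'a) \<Rightarrow> 'a set \<Rightarrow> nat \<Rightarrow> 'a set" where
  "first_entry X T M n = {x\<in>X. (T ^^ n) x \<in> M \<and> (\<forall>i<n. (T ^^ i) x \<notin> M)}"

lemma first_entry_0: "M \<subseteq> X \<Longrightarrow> first_entry X T M 0 = M"
  unfolding first_entry_def by auto

lemma clopen_in_first_entry:
  assumes "continuous_on X T" "T ` X \<subseteq> X" "clopen_in X M"
  shows "clopen_in X (first_entry X T M n)"
proof -
  have "first_entry X T M n = {x\<in>X. (T ^^ n) x \<in> M} - (\<Union>i<n. {x\<in>X. (T ^^ i) x \<in> M})"
    unfolding first_entry_def by blast
  then show ?thesis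
    using clopen_in_preimage_funpow[OF assms] by (simp add: clopen_in_Diff clopen_in_UN)
qed

text \<open>If \<open>y\<close> and \<open>T\<^sup>d y\<close>, \<open>0 < d \<le> n\<close>, both entered \<open>M\<close> first at time \<open>n\<close>, the latter would
  enter already at time \<open>n - d\<close>; so no separation property of \<open>M\<close> is needed.\<close>
lemma no_early_return_first_entry:
  assumes "N \<le> Suc n"
  shows "no_early_return T N (first_entry X T M n)"
  unfolding no_early_return_def
proof (intro ballI allI impI notI)
  fix y d assume y: "y \<in> first_entry X T M n" and d: "0 < d \<and> d < N"
    and Ty: "(T ^^ d) y \<in> first_entry X T M n"
  have "(T ^^ (n - d)) ((T ^^ d) y) = (T ^^ (n - d + d)) y" by (simp add: funpow_add)
  also have "\<dots> = (T ^^ n) y" using d assms by simp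
  finally have "(T ^^ (n - d)) ((T ^^ d) y) \<in> M" using y unfolding first_entry_def by simp
  moreover have "n - d < n" using d assms by simp
  ultimately show False using Ty unfolding first_entry_def by blast
qed

lemma first_entry_decomposition:
  assumes "T ` X \<subseteq> X" "x \<in> X" "(T ^^ k) x \<in> M" "k < K * N"
  obtains q r where "q < K" "r < N" "(T ^^ r) x \<in> first_entry X T M (q * N)"
proof -
  define h where "h = (LEAST k. (T ^^ k) x \<in> M)"
  have hM: "(T ^^ h) x \<in> M" using assms(3) unfolding h_def by (rule LeastI)
  have "h \<le> k" using assms(3) unfolding h_def by (rule Least_le)
  have hmin: "\<And>i. i < h \<Longrightarrow> (T ^^ i) x \<notin> M" unfolding h_def by (rule not_less_Least)
  define q r where "q = h div N" and "r = h mod N"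
  have h: "h = q * N + r" unfolding q_def r_def by simp
  have "0 < N" using assms(4) by (cases N) simp_all
  then have "r < N" unfolding r_def by simp
  moreover have "q < K" unfolding q_def using \<open>h \<le> k\<close> assms(4) less_mult_imp_div_less by fastforce
  moreover have "(T ^^ r) x \<in> first_entry X T M (q * N)"
    unfolding first_entry_def
  proof (intro CollectI conjI allI impI)
    show "(T ^^ r) x \<in> X" using funpow_in_set[OF assms(1,2)] .
    show "(T ^^ (q * N)) ((T ^^ r) x) \<in> M" using hM h by (simp add: funpow_add)
    fix i assume "i < q * N"
    then show "(T ^^ i) ((T ^^ r) x) \<notin> M" using hmin[of "i + r"] h by (simp add: funpow_add)
  qed
  ultimately show thesis using that by blast
qed

lemma open_rokhlin_tower_preimages:
  assumes "T ` X = X" "continuous_on X T" "compact X"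
    and B: "clopen_in X B" "B \<noteq> {}" "no_early_return T N B"
  shows "open_rokhlin_tower X T N (\<lambda>k. {x\<in>X. (T ^^ k) x \<in> B})"
proof -
  have img: "T ` X \<subseteq> X" using assms(1) by simp
  have level: "clopen_in X {x\<in>X. (T ^^ k) x \<in> B}" for k
    by (rule clopen_in_preimage_funpow[OF assms(2) img B(1)])
  have closure_level: "closure {x\<in>X. (T ^^ k) x \<in> B} = {x\<in>X. (T ^^ k) x \<in> B}" for k
    using level[of k] closedin_closed_trans[OF _ compact_imp_closed[OF assms(3)]]
    unfolding clopen_in_def by (simp add: closure_closed)
  have disjoint: "{x\<in>X. (T ^^ i) x \<in> B} \<inter> {x\<in>X. (T ^^ j) x \<in> B} = {}" if "i < j" "j < N" for i j
  proof -
    have "(T ^^ (j - i)) ((T ^^ i) x) = (T ^^ (j - i + i)) x" for x by (simp add: funpow_add)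
    then have "(T ^^ j) x = (T ^^ (j - i)) ((T ^^ i) x)" for x using that by simp
    moreover have "0 < j - i" "j - i < N" using that by simp_all
    ultimately show ?thesis using B(3) unfolding no_early_return_def by auto
  qed
  show ?thesis unfolding open_rokhlin_tower_def
  proof (intro conjI allI impI)
    fix k
    obtain b where "b \<in> B" using B(2) by blast
    moreover have "B \<subseteq> (T ^^ k) ` X" using funpow_image_eq[OF assms(1)] clopen_in_subset[OF B(1)] by simp
    ultimately show "{x\<in>X. (T ^^ k) x \<in> B} \<noteq> {}" by auto
    show "{x\<in>X. (T ^^ k) x \<in> B} \<subseteq> X" by blast
    show "openin (top_of_set X) {x\<in>X. (T ^^ k) x \<in> B}" using level unfolding clopen_in_def by blast
  next
    fix k :: nat assume "1 \<le> k \<and> k < N"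
    then have "(T ^^ k) x = (T ^^ (k - 1)) (T x)" for x
      by (metis Suc_diff_1 funpow_Suc_right comp_apply less_le_trans zero_less_one)
    then show "{x\<in>X. (T ^^ k) x \<in> B} = {x\<in>X. T x \<in> {x\<in>X. (T ^^ (k - 1)) x \<in> B}}"
      using img by auto
  next
    fix i j assume ij: "i < N" "j < N" "i \<noteq> j"
    show "closure {x\<in>X. (T ^^ i) x \<in> B} \<inter> closure {x\<in>X. (T ^^ j) x \<in> B} = {}"
      unfolding closure_level using disjoint[of i j] disjoint[of j i] ij
      by (cases "i < j") (simp_all add: Int_commute)
  qed
qed

lemma open_rokhlin_towers_first_entry:
  assumes "T ` X = X" "continuous_on X T" "compact X"
    and M: "clopen_in X M" "M \<noteq> {}" "no_early_return T N M"
    and enters: "\<And>x. x \<in> X \<Longrightarrow> \<exists>k < K * N. (T ^^ k) x \<in> M"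
  shows "\<exists>tw. (\<forall>q<K. open_rokhlin_tower X T N (tw q)) \<and> (\<Union>q<K. \<Union>k<N. tw q k) = X"
proof -
  have img: "T ` X \<subseteq> X" using assms(1) by simp
  \<comment> \<open>an empty first entrance set is replaced by \<open>M\<close>, only to keep the towers nonempty\<close>
  define B where "B q = (if first_entry X T M (q * N) = {} then M else first_entry X T M (q * N))" for q
  define tw where "tw q k = {x\<in>X. (T ^^ k) x \<in> B q}" for q k
  have "no_early_return T N (first_entry X T M (q * N))" for q
    using M(3) first_entry_0[OF clopen_in_subset[OF M(1)]] no_early_return_first_entry[of N "q * N"]
    by (cases q) simp_all
  then have "open_rokhlin_tower X T N (tw q)" for q
    unfolding tw_def B_def
    by (intro open_rokhlin_tower_preimages[OF assms(1-3)])
      (simp_all add: M clopen_in_first_entry[OF assms(2) img M(1)])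
  moreover have "X \<subseteq> (\<Union>q<K. \<Union>k<N. tw q k)"
  proof
    fix x assume x: "x \<in> X"
    then obtain k where "k < K * N" "(T ^^ k) x \<in> M" using enters by blast
    then obtain q r where "q < K" "r < N" "(T ^^ r) x \<in> first_entry X T M (q * N)"
      using first_entry_decomposition[OF img x] by metis
    then show "x \<in> (\<Union>q<K. \<Union>k<N. tw q k)" using x unfolding tw_def B_def by auto
  qed
  moreover have "(\<Union>q<K. \<Union>k<N. tw q k) \<subseteq> X" unfolding tw_def by blast
  ultimately show ?thesis by blast
qed

theorem theorem4p7:
  fixes X :: "'a::metric_space set" and T :: "'a \<Rightarrow> 'a"
  assumes "compact X" and "zero_dimensional X"
    and "local_homeomorphism X T" and "T ` X = X" and "aperiodic X T"
    and "finite (Sp_l X T)"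
  shows "rokhlin_dim_le X T (2 * card (Sp_l X T) + 1)"
  unfolding rokhlin_dim_le_def
proof (intro allI impI)
  fix N :: nat assume "N \<ge> 1"
  let ?c = "card (Sp_l X T)"
  have img: "T ` X \<subseteq> X" using assms(4) by simp
  obtain M where M: "clopen_in X M" "no_early_return T N M" "X \<subseteq> M \<union> orbit_near X T N M"
    using exists_clopen_no_early_return_absorbing[OF assms(3,1,2,5)] .
  have enters: "\<exists>k < (?c + 2) * N. (T ^^ k) x \<in> M" if "x \<in> X" for x
    using orbit_enters_within[OF img assms(5,6) _ clopen_in_subset[OF M(1)] M(3) that] \<open>N \<ge> 1\<close>
    by simp
  show "\<exists>m tw. m \<le> 2 * ?c + 1 + 1 \<and> (\<forall>i<m. open_rokhlin_tower X T N (tw i)) \<and>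
      (\<Union>i<m. \<Union>k<N. tw i k) = X"
  proof (cases "X = {}")
    case True
    then show ?thesis by (intro exI[of _ 0]) simp
  next
    case False
    then have "M \<noteq> {}" using enters by blast
    then obtain tw where "\<forall>q<?c + 2. open_rokhlin_tower X T N (tw q)" "(\<Union>q<?c + 2. \<Union>k<N. tw q k) = X"
      using open_rokhlin_towers_first_entry[OF assms(4) local_homeomorphism_continuous_on[OF assms(3)]
          assms(1) M(1) _ M(2) enters] by blast
    then show ?thesis by (intro exI[of _ "?c + 2"]) auto
  qed
qed

end
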